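(* Let $d\ge 2$, $\underline E\subset\mathbb F_q^{d-1}$, $A\subset\mathbb F_q$, and $E=\underline E\times A\subset\mathbb F_q^{d-1}\times\mathbb F_q=\mathbb F_q^d$. Then $$\mathfrak M(E)\leq 2q^{-d-1}|A|^2|\underline E|.$$
   Context: $\mathbb F_q$ is a finite field of characteristic greater than two, and $\chi$ is a fixed nontrivial additive character of $\mathbb F_q$. For $f:\mathbb F_q^d\to\mathbb C$, $\widehat f(m)=q^{-d}\sum_{x\in\mathbb F_q^d}\chi(-m\cdot x)f(x)$; sets are identified with their indicator functions. For $m\in\mathbb F_q^d$, $\|m\|=m_1^2+\dots+m_d^2$; $S_r=\{x\in\mathbb F_q^d:\|x\|=r\}$. $\mathfrak M(E)=\max_{r\in\mathbb F_q}\sum_{m\in S_r}|\widehat E(m)|^2$. *)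

theory Defs
  imports "HOL-Analysis.Analysis"
begin

text \<open>F_q is a finite field type 'a. F_q^d is represented as F_q^(d-1) x F_q, i.e. the
  type ('a^'n) \<times> 'a with d - 1 = CARD('n) (so d = CARD('n) + 1 \<ge> 2).\<close>

definition add_char :: "('a::{finite,field} \<Rightarrow> complex) \<Rightarrow> bool" where
  "add_char ch \<longleftrightarrow> (\<forall>x y. ch (x + y) = ch x * ch y) \<and> (\<forall>x. norm (ch x) = 1)"

definition nontrivial_add_char :: "('a::{finite,field} \<Rightarrow> complex) \<Rightarrow> bool" where
  "nontrivial_add_char ch \<longleftrightarrow> add_char ch \<and> (\<exists>x. ch x \<noteq> 1)"

definition dotp :: "(('a::{finite,field})^'n) \<times> 'a \<Rightarrow> ('a^'n) \<times> 'a \<Rightarrow> 'a" where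
  "dotp m x = (\<Sum>i\<in>UNIV. fst m $ i * fst x $ i) + snd m * snd x"

definition qnorm :: "(('a::{finite,field})^'n) \<times> 'a \<Rightarrow> 'a" where
  "qnorm m = (\<Sum>i\<in>UNIV. (fst m $ i)^2) + (snd m)^2"

definition qsphere :: "'a \<Rightarrow> ((('a::{finite,field})^'n) \<times> 'a) set" where
  "qsphere r = {x. qnorm x = r}"

definition fourier :: "('a::{finite,field} \<Rightarrow> complex) \<Rightarrow> (('a^'n) \<times> 'a) set \<Rightarrow> ('a^'n) \<times> 'a \<Rightarrow> complex" where
  "fourier ch E m = (1 / of_nat CARD('a) ^ (CARD('n) + 1)) *
      (\<Sum>x\<in>UNIV. ch (- dotp m x) * indicator E x)"

definition MM :: "('a::{finite,field} \<Rightarrow> complex) \<Rightarrow> (('a^'n) \<times> 'a) set \<Rightarrow> real" where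
  "MM ch E = Max ((\<lambda>r. \<Sum>m\<in>qsphere r. (cmod (fourier ch E m))^2) ` (UNIV :: 'a set))"

end

theory Submission
  imports Defs
begin

(* Write a frequency of F_q^d as (m, t) with m \<in> F_q^(d-1), t \<in> F_q.  For
   E = Eu \<times> A the Fourier transform factorises:
     \<hat>E(m,t) = q^(-d) \<cdot> S(m) \<cdot> T(t),  S(m) = \<Sum>x\<in>Eu. \<chi>(-m\<cdot>x),  T(t) = \<Sum>a\<in>A. \<chi>(-t a).
   On the sphere S_r, for each fixed m there are at most two t with t^2 = r - \<parallel>m\<parallel>, so
     \<Sum>(m,t)\<in>S_r |\<hat>E|^2 \<le> 2 q^(-2d) \<cdot> max |T|^2 \<cdot> \<Sum>m |S(m)|^2.
   The trivial bound gives |T|^2 \<le> |A|^2 and orthogonality of characters (Parseval) gives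
   \<Sum>m |S(m)|^2 = q^(d-1) |Eu|, whence the bound 2 q^(-d-1) |A|^2 |Eu| for every r.
   The argument does not need the hypothesis that the characteristic exceeds two. *)

lemma add_char_zero:
  assumes "add_char ch" shows "ch 0 = 1"
proof -
  have "ch 0 = ch 0 * ch 0" using assms unfolding add_char_def by (metis add_0)
  moreover have "ch 0 \<noteq> 0" using assms unfolding add_char_def by (metis norm_zero zero_neq_one)
  ultimately show ?thesis by (metis mult_cancel_left1)
qed

lemma add_char_uminus:
  assumes "add_char ch" shows "ch (- x) = cnj (ch x)"
proof -
  have "ch x * ch (- x) = 1"
    using assms add_char_zero[OF assms] unfolding add_char_def by (metis add.right_inverse)
  moreover have "ch x * cnj (ch x) = 1"
    using assms complex_norm_square[of "ch x"] unfolding add_char_def by simp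
  ultimately show ?thesis by (metis mult.commute mult.left_neutral mult.assoc)
qed

definition vdot :: "('a::field)^'n \<Rightarrow> 'a^'n \<Rightarrow> 'a" where
  "vdot m x = (\<Sum>i\<in>UNIV. m $ i * x $ i)"

lemma vdot_add_left: "vdot (m + w) z = vdot m z + vdot w z"
  unfolding vdot_def by (simp add: distrib_right sum.distrib)

lemma vdot_diff_right: "vdot m (y - x) = vdot m y - vdot m x"
  unfolding vdot_def by (simp add: right_diff_distrib sum_subtractf)

lemma dotp_split: "dotp (m, t) (x, a) = vdot m x + t * a"
  unfolding dotp_def vdot_def by simp

text \<open>Translating the frequency by a vector \<open>w\<close> with \<open>w \<cdot> z = x0\<close>, \<open>\<chi> x0 \<noteq> 1\<close>, multiplies
  the sum by \<open>\<chi> x0\<close>.\<close>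
lemma char_sum_orthogonal:
  fixes z :: "('a::{finite,field})^'n::finite"
  assumes ac: "add_char ch" and x0: "ch x0 \<noteq> 1"
  shows "(\<Sum>m\<in>UNIV. ch (vdot m z)) = (if z = 0 then of_nat (CARD('a) ^ CARD('n)) else 0)"
proof (cases "z = 0")
  case True
  then show ?thesis by (simp add: vdot_def add_char_zero[OF ac])
next
  case False
  then obtain i where i: "z $ i \<noteq> 0" by (metis vec_eq_iff zero_index)
  define w :: "'a^'n" where "w = (\<chi> j. if j = i then x0 / z $ i else 0)"
  have wz: "vdot w z = x0"
  proof -
    have "vdot w z = (\<Sum>j\<in>UNIV. if j = i then x0 / z $ i * z $ j else 0)"
      unfolding vdot_def w_def by (intro sum.cong) auto
    also have "\<dots> = x0" using i by simp
    finally show ?thesis .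
  qed
  have "(\<Sum>m\<in>UNIV. ch (vdot m z)) = (\<Sum>m\<in>UNIV. ch (vdot (m + w) z))"
    by (rule sum.reindex_bij_witness[where j="\<lambda>m. m - w" and i="\<lambda>m. m + w"]) auto
  also have "\<dots> = ch x0 * (\<Sum>m\<in>UNIV. ch (vdot m z))"
    using ac unfolding add_char_def by (simp add: vdot_add_left wz sum_distrib_left mult.commute)
  finally have "(1 - ch x0) * (\<Sum>m\<in>UNIV. ch (vdot m z)) = 0" by (simp add: algebra_simps)
  then show ?thesis using x0 False by simp
qed

lemma char_sum_parseval:
  fixes E :: "(('a::{finite,field})^'n::finite) set"
  assumes ac: "add_char ch" and x0: "ch x0 \<noteq> 1"
  shows "(\<Sum>m\<in>UNIV. (cmod (\<Sum>x\<in>E. ch (- vdot m x)))^2) = real CARD('a) ^ CARD('n) * real (card E)"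
proof -
  have term_eq: "ch (- vdot m x) * cnj (ch (- vdot m y)) = ch (vdot m (y - x))" for m x y
  proof -
    have "ch (vdot m (y - x)) = ch (vdot m y) * ch (- vdot m x)"
      using ac unfolding add_char_def by (metis vdot_diff_right diff_conv_add_uminus)
    then show ?thesis using add_char_uminus[OF ac, of "vdot m y"] by simp
  qed
  have "complex_of_real (\<Sum>m\<in>UNIV. (cmod (\<Sum>x\<in>E. ch (- vdot m x)))^2)
      = (\<Sum>m\<in>UNIV. (\<Sum>x\<in>E. ch (- vdot m x)) * cnj (\<Sum>y\<in>E. ch (- vdot m y)))"
    by (simp only: of_real_sum complex_norm_square)
  also have "\<dots> = (\<Sum>m\<in>UNIV. \<Sum>x\<in>E. \<Sum>y\<in>E. ch (vdot m (y - x)))"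
    by (simp add: sum_product term_eq)
  also have "\<dots> = (\<Sum>x\<in>E. \<Sum>y\<in>E. \<Sum>m\<in>UNIV. ch (vdot m (y - x)))"
    by (subst sum.swap) (simp add: sum.swap[of _ UNIV])
  also have "\<dots> = (\<Sum>x\<in>E. \<Sum>y\<in>E. if y = x then of_nat (CARD('a) ^ CARD('n)) else 0)"
    by (simp add: char_sum_orthogonal[OF ac x0])
  also have "\<dots> = complex_of_real (real CARD('a) ^ CARD('n) * real (card E))"
    by simp
  finally show ?thesis by (simp only: of_real_eq_iff)
qed

lemma char_sum_trivial_bound:
  fixes A :: "'a::{finite,field} set"
  assumes ac: "add_char ch"
  shows "(cmod (\<Sum>a\<in>A. ch (- (t * a))))^2 \<le> real (card A)^2"
proof -
  have "cmod (\<Sum>a\<in>A. ch (- (t * a))) \<le> (\<Sum>a\<in>A. cmod (ch (- (t * a))))" by (rule norm_sum)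
  also have "\<dots> = real (card A)" using ac unfolding add_char_def by simp
  finally show ?thesis by (simp add: power_mono)
qed

lemma fourier_product_set:
  fixes Eu :: "(('a::{finite,field})^'n::finite) set" and A :: "'a set"
  assumes ac: "add_char ch"
  shows "fourier ch (Eu \<times> A) (m, t) = (1 / of_nat CARD('a) ^ (CARD('n) + 1)) *
     ((\<Sum>x\<in>Eu. ch (- vdot m x)) * (\<Sum>a\<in>A. ch (- (t * a))))"
proof -
  have "(\<Sum>z\<in>UNIV. ch (- dotp (m, t) z) * indicator (Eu \<times> A) z)
      = (\<Sum>z\<in>Eu \<times> A. ch (- dotp (m, t) z))"
    by (rule sum.mono_neutral_cong_right) (auto simp: indicator_def)
  also have "\<dots> = (\<Sum>x\<in>Eu. \<Sum>a\<in>A. ch (- dotp (m, t) (x, a)))"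
    by (simp add: sum.cartesian_product)
  also have "\<dots> = (\<Sum>x\<in>Eu. \<Sum>a\<in>A. ch (- vdot m x) * ch (- (t * a)))"
    using ac unfolding add_char_def by (simp only: dotp_split minus_add_distrib)
  also have "\<dots> = (\<Sum>x\<in>Eu. ch (- vdot m x)) * (\<Sum>a\<in>A. ch (- (t * a)))"
    by (simp add: sum_product)
  finally show ?thesis unfolding fourier_def by simp
qed

lemma qsphere_fibres:
  "qsphere r = Sigma (UNIV :: (('a::{finite,field})^'n::finite) set)
     (\<lambda>m. {t. t^2 = r - (\<Sum>i\<in>UNIV. (m $ i)^2)})"
  unfolding qsphere_def qnorm_def by (auto simp: algebra_simps)

lemma card_square_roots: "card {t::'a::{finite,field}. t^2 = c} \<le> 2"
proof (cases "\<exists>s. s^2 = c")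
  case True
  then obtain s where s: "s^2 = c" by blast
  have "{t. t^2 = c} \<subseteq> {s, -s}"
    using s by (auto simp: power2_eq_iff)
  then have "card {t. t^2 = c} \<le> card {s, -s}" by (simp add: card_mono)
  also have "\<dots> \<le> 2" by (simp add: card_insert_le_m1)
  finally show ?thesis .
next
  case False
  then show ?thesis by simp
qed

text \<open>Since every fibre of the sphere has at most two points, a product-shaped
  nonnegative function \<open>g(m) h(t)\<close> with \<open>h \<le> H\<close> sums over \<open>S_r\<close> to at most \<open>2H \<Sum>m g(m)\<close>.\<close>
lemma qsphere_product_sum_bound:
  fixes g :: "('a::{finite,field})^'n::finite \<Rightarrow> real" and h :: "'a \<Rightarrow> real"
  assumes g_nonneg: "\<And>m. g m \<ge> 0" and h_bound: "\<And>t. h t \<le> H" and H_nonneg: "H \<ge> 0"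
  shows "(\<Sum>(m, t)\<in>qsphere r. g m * h t) \<le> 2 * H * (\<Sum>m\<in>UNIV. g m)"
proof -
  define B where "B m = {t. t^2 = r - (\<Sum>i\<in>UNIV. (m $ i)^2)}" for m :: "'a^'n"
  have fibre_bound: "(\<Sum>t\<in>B m. h t) \<le> 2 * H" for m
  proof -
    have "(\<Sum>t\<in>B m. h t) \<le> real (card (B m)) * H"
      using sum_bounded_above[of "B m" h H] h_bound by blast
    also have "\<dots> \<le> 2 * H"
      using card_square_roots H_nonneg unfolding B_def by (intro mult_right_mono) auto
    finally show ?thesis .
  qed
  have "(\<Sum>(m, t)\<in>qsphere r. g m * h t) = (\<Sum>m\<in>UNIV. \<Sum>t\<in>B m. g m * h t)"
    unfolding qsphere_fibres B_def by (rule sum.Sigma[symmetric]) auto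
  also have "\<dots> = (\<Sum>m\<in>UNIV. g m * (\<Sum>t\<in>B m. h t))"
    by (simp add: sum_distrib_left)
  also have "\<dots> \<le> (\<Sum>m\<in>UNIV. g m * (2 * H))"
    by (intro sum_mono mult_left_mono fibre_bound g_nonneg)
  also have "\<dots> = 2 * H * (\<Sum>m\<in>UNIV. g m)"
    by (subst sum_distrib_right[symmetric]) (rule mult.commute)
  finally show ?thesis .
qed

lemma normalisation_exponent:
  fixes q :: real assumes "q > 0"
  shows "(1 / q ^ (n + 1))^2 * q ^ n = q powi (- int (n + 1) - 1)"
proof -
  have "- int (n + 1) - 1 = - int (n + 2)" by simp
  then have "q powi (- int (n + 1) - 1) = 1 / q ^ (n + 2)"
    by (simp only: power_int_minus power_int_of_nat) (simp add: divide_inverse)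
  also have "\<dots> = (1 / q ^ (n + 1))^2 * q ^ n"
    using assms by (simp add: field_simps power_add power2_eq_square)
  finally show ?thesis by simp
qed

theorem mainTheorem12:
  fixes ch :: "'a::{finite,field} \<Rightarrow> complex"
    and Eu :: "('a^'n) set" and A :: "'a set"
  assumes "CHAR('a) > 2"
    and "nontrivial_add_char ch"
  shows "MM ch (Eu \<times> A) \<le>
    2 * real CARD('a) powi (- int (CARD('n) + 1) - 1) * real (card A)^2 * real (card Eu)"
proof -
  have ac: "add_char ch" and "\<exists>x. ch x \<noteq> 1"
    using assms(2) unfolding nontrivial_add_char_def by auto
  then obtain x0 where x0: "ch x0 \<noteq> 1" by blast
  define q where "q = real CARD('a)"
  have q_pos: "q > 0" unfolding q_def by simp
  define c where "c = 1 / q ^ (CARD('n) + 1)"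
  define g where "g m = (cmod (\<Sum>x\<in>Eu. ch (- vdot m x)))^2" for m
  define h where "h t = (cmod (\<Sum>a\<in>A. ch (- (t * a))))^2" for t
  have transform: "(cmod (fourier ch (Eu \<times> A) z))^2 = c^2 * (g (fst z) * h (snd z))" for z
  proof -
    obtain m t where z: "z = (m, t)" by fastforce
    show ?thesis
      unfolding z fourier_product_set[OF ac] c_def g_def h_def q_def
      by (simp add: norm_mult norm_divide norm_power power_mult_distrib power_divide)
  qed
  have sphere_bound: "(\<Sum>z\<in>qsphere r. (cmod (fourier ch (Eu \<times> A) z))^2)
      \<le> 2 * q powi (- int (CARD('n) + 1) - 1) * real (card A)^2 * real (card Eu)" for r
  proof -
    have "(\<Sum>z\<in>qsphere r. (cmod (fourier ch (Eu \<times> A) z))^2) = c^2 * (\<Sum>(m, t)\<in>qsphere r. g m * h t)"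
      by (simp add: transform sum_distrib_left case_prod_beta)
    also have "\<dots> \<le> c^2 * (2 * real (card A)^2 * (\<Sum>m\<in>UNIV. g m))"
      using qsphere_product_sum_bound[of g h "real (card A)^2"] char_sum_trivial_bound[OF ac]
      unfolding g_def h_def by (intro mult_left_mono) auto
    also have "\<dots> = 2 * (c^2 * q ^ CARD('n)) * real (card A)^2 * real (card Eu)"
      unfolding g_def char_sum_parseval[OF ac x0] q_def by simp
    finally show ?thesis
      unfolding c_def normalisation_exponent[OF q_pos] .
  qed
  show ?thesis
    unfolding MM_def using sphere_bound by (subst Max_le_iff) (auto simp: q_def)
qed

end
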